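(* Let $X$ be a fibrewise pointed space over $B$. If $X$ is fibrewise locally equiconnected and $X\times_BX$ is a normal space, then $$\mathrm{TC}_B(X)\le\mathrm{TC}^B_B(X)\le\mathrm{TC}_B(X)+1.$$
   Context: A fibrewise space over $B$ is a space $X$ with $p_X:X\to B$; fibrewise maps satisfy $p_Y\circ f=p_X$; fibrewise homotopies $H$ satisfy $p_Y(H(x,t))=p_X(x)$ ($\simeq_B$). A fibrewise pointed space has $s_X:B\to X$ with $p_X\circ s_X=1_B$; fibrewise pointed homotopies additionally satisfy $H(s_X(b),t)=s_Y(b)$ ($\simeq^B_B$). A fibrewise map $j:A\to X$ is a fibrewise cofibration if it has the homotopy extension property for fibrewise homotopies: for every fibrewise map $f:X\to Y$ and fibrewise homotopy $H:A\times I\to Y$ with $H(-,0)=f\circ j$ there is a fibrewise homotopy $\tilde H:X\times I\to Y$ with $\tilde H(-,0)=f$ and $\tilde H\circ(j\times 1_I)=H$; it is closed if it is a closed embedding. $X$ is fibrewise locally equiconnected if the diagonal $\Delta_X:X\to X\times_BX=\{(x,y):p_X(x)=p_X(y)\}$ is a closed fibrewise cofibration. $\mathrm{secat}_B(f)$ (resp. $\mathrm{secat}^B_B(f)$) for a fibrewise (resp. fibrewise pointed) map $f:E\to X$ is the least $k$ such that $X$ is covered by $k+1$ open sets $U$ (resp. open sets $U\supseteq s_X(B)$) admitting a fibrewise (resp. fibrewise pointed) map $s:U\to E$ with $f\circ s\simeq_B$ (resp. $\simeq^B_B$) the inclusion. $P_B(X)=\{(b,\alpha)\in B\times X^I:p_X\circ\alpha\equiv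 b\}$ with projection $(b,\alpha)\mapsto b$ and section $b\mapsto(b,c_{s_X(b)})$; $X\times_BX$ has section $b\mapsto(s_X(b),s_X(b))$; $\Pi_X(b,\alpha)=(\alpha(0),\alpha(1))$. $\mathrm{TC}_B(X)=\mathrm{secat}_B(\Pi_X)$ and $\mathrm{TC}^B_B(X)=\mathrm{secat}^B_B(\Pi_X)$. *)

theory Defs
  imports "HOL-Analysis.Analysis" "HOL-Library.Extended_Nat" "HOL-Library.FuncSet"
begin

abbreviation unit_interval :: "real topology" where
  "unit_interval \<equiv> top_of_set {0..1}"

definition fib_space :: "'b topology \<Rightarrow> 'x topology \<Rightarrow> ('x \<Rightarrow> 'b) \<Rightarrow> bool" where
  "fib_space B X p \<longleftrightarrow> continuous_map X B p"

definition fibp_space :: "'b topology \<Rightarrow> 'x topology \<Rightarrow> ('x \<Rightarrow> 'b) \<Rightarrow> ('b \<Rightarrow> 'x) \<Rightarrow> bool" where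
  "fibp_space B X p s \<longleftrightarrow> continuous_map X B p \<and> continuous_map B X s \<and>
     (\<forall>b\<in>topspace B. p (s b) = b)"

definition fib_map :: "'x topology \<Rightarrow> ('x \<Rightarrow> 'b) \<Rightarrow> 'y topology \<Rightarrow> ('y \<Rightarrow> 'b) \<Rightarrow> ('x \<Rightarrow> 'y) \<Rightarrow> bool" where
  "fib_map X pX Y pY f \<longleftrightarrow> continuous_map X Y f \<and> (\<forall>x\<in>topspace X. pY (f x) = pX x)"

definition fib_homotopy :: "'x topology \<Rightarrow> ('x \<Rightarrow> 'b) \<Rightarrow> 'y topology \<Rightarrow> ('y \<Rightarrow> 'b)
    \<Rightarrow> ('x \<times> real \<Rightarrow> 'y) \<Rightarrow> bool" where
  "fib_homotopy X pX Y pY H \<longleftrightarrow> continuous_map (prod_topology X unit_interval) Y H \<and>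
     (\<forall>x\<in>topspace X. \<forall>t\<in>{0..1}. pY (H (x, t)) = pX x)"

definition fib_homotopic :: "'x topology \<Rightarrow> ('x \<Rightarrow> 'b) \<Rightarrow> 'y topology \<Rightarrow> ('y \<Rightarrow> 'b)
    \<Rightarrow> ('x \<Rightarrow> 'y) \<Rightarrow> ('x \<Rightarrow> 'y) \<Rightarrow> bool" where
  "fib_homotopic X pX Y pY f g \<longleftrightarrow> (\<exists>H. fib_homotopy X pX Y pY H \<and>
     (\<forall>x\<in>topspace X. H (x, 0) = f x \<and> H (x, 1) = g x))"

definition fibp_homotopic :: "'b topology \<Rightarrow> 'x topology \<Rightarrow> ('x \<Rightarrow> 'b) \<Rightarrow> ('b \<Rightarrow> 'x)
    \<Rightarrow> 'y topology \<Rightarrow> ('y \<Rightarrow> 'b) \<Rightarrow> ('b \<Rightarrow> 'y) \<Rightarrow> ('x \<Rightarrow> 'y) \<Rightarrow> ('x \<Rightarrow> 'y) \<Rightarrow> bool" where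
  "fibp_homotopic B X pX sX Y pY sY f g \<longleftrightarrow> (\<exists>H. fib_homotopy X pX Y pY H \<and>
     (\<forall>x\<in>topspace X. H (x, 0) = f x \<and> H (x, 1) = g x) \<and>
     (\<forall>b\<in>topspace B. \<forall>t\<in>{0..1}. H (sX b, t) = sY b))"

text \<open>The test spaces Y range over fibrewise spaces whose carrier lives in the type
  (('a + 'x) \<times> real); every fibrewise mapping cylinder of j embeds into this type, so
  this is equivalent to the HEP for all fibrewise spaces.\<close>
definition fib_cofibration :: "'b topology \<Rightarrow> 'a topology \<Rightarrow> ('a \<Rightarrow> 'b) \<Rightarrow> 'x topology
    \<Rightarrow> ('x \<Rightarrow> 'b) \<Rightarrow> ('a \<Rightarrow> 'x) \<Rightarrow> bool" where
  "fib_cofibration B A pA X pX j \<longleftrightarrow> fib_map A pA X pX j \<and>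
     (\<forall>(Y :: (('a + 'x) \<times> real) topology) pY f H.
        fib_space B Y pY \<and> fib_map X pX Y pY f \<and> fib_homotopy A pA Y pY H \<and>
        (\<forall>a\<in>topspace A. H (a, 0) = f (j a))
        \<longrightarrow> (\<exists>H'. fib_homotopy X pX Y pY H' \<and>
               (\<forall>x\<in>topspace X. H' (x, 0) = f x) \<and>
               (\<forall>a\<in>topspace A. \<forall>t\<in>{0..1}. H' (j a, t) = H (a, t))))"

definition closed_fib_cofibration :: "'b topology \<Rightarrow> 'a topology \<Rightarrow> ('a \<Rightarrow> 'b) \<Rightarrow> 'x topology
    \<Rightarrow> ('x \<Rightarrow> 'b) \<Rightarrow> ('a \<Rightarrow> 'x) \<Rightarrow> bool" where
  "closed_fib_cofibration B A pA X pX j \<longleftrightarrow> fib_cofibration B A pA X pX j \<and>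
     embedding_map A X j \<and> closedin X (j ` topspace A)"

definition fib_prod :: "'x topology \<Rightarrow> ('x \<Rightarrow> 'b) \<Rightarrow> ('x \<times> 'x) topology" where
  "fib_prod X p = subtopology (prod_topology X X)
     {(x, y). x \<in> topspace X \<and> y \<in> topspace X \<and> p x = p y}"

definition fib_prod_proj :: "('x \<Rightarrow> 'b) \<Rightarrow> ('x \<times> 'x \<Rightarrow> 'b)" where
  "fib_prod_proj p = (\<lambda>(x, y). p x)"

definition fib_prod_sec :: "('b \<Rightarrow> 'x) \<Rightarrow> ('b \<Rightarrow> 'x \<times> 'x)" where
  "fib_prod_sec s = (\<lambda>b. (s b, s b))"

definition diagonal :: "'x \<Rightarrow> 'x \<times> 'x" where
  "diagonal x = (x, x)"

definition fib_LEC :: "'b topology \<Rightarrow> 'x topology \<Rightarrow> ('x \<Rightarrow> 'b) \<Rightarrow> bool" where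
  "fib_LEC B X p \<longleftrightarrow> closed_fib_cofibration B X p (fib_prod X p) (fib_prod_proj p) diagonal"

definition paths :: "'x topology \<Rightarrow> (real \<Rightarrow> 'x) set" where
  "paths X = {\<alpha>. continuous_map unit_interval X \<alpha> \<and> \<alpha> \<in> extensional {0..1}}"

definition compact_open :: "'x topology \<Rightarrow> (real \<Rightarrow> 'x) topology" where
  "compact_open X = topology_generated_by
     (insert (paths X) {{\<alpha> \<in> paths X. \<alpha> ` K \<subseteq> V} | K V. compactin unit_interval K \<and> openin X V})"

definition fib_paths :: "'b topology \<Rightarrow> 'x topology \<Rightarrow> ('x \<Rightarrow> 'b) \<Rightarrow> ('b \<times> (real \<Rightarrow> 'x)) topology" where
  "fib_paths B X p = subtopology (prod_topology B (compact_open X))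
     {(b, \<alpha>). b \<in> topspace B \<and> \<alpha> \<in> paths X \<and> (\<forall>t\<in>{0..1}. p (\<alpha> t) = b)}"

definition fib_paths_proj :: "'b \<times> (real \<Rightarrow> 'x) \<Rightarrow> 'b" where
  "fib_paths_proj = fst"

definition fib_paths_sec :: "('b \<Rightarrow> 'x) \<Rightarrow> 'b \<Rightarrow> 'b \<times> (real \<Rightarrow> 'x)" where
  "fib_paths_sec s = (\<lambda>b. (b, restrict (\<lambda>t. s b) {0..1}))"

definition Pi_map :: "'b \<times> (real \<Rightarrow> 'x) \<Rightarrow> 'x \<times> 'x" where
  "Pi_map = (\<lambda>(b, \<alpha>). (\<alpha> 0, \<alpha> 1))"

text \<open>Fibrewise sectional category secat_B(f) of f : E \<rightarrow> X (\<infinity> if no finite cover exists).\<close>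
definition secat_B :: "'e topology \<Rightarrow> ('e \<Rightarrow> 'b) \<Rightarrow> 'x topology \<Rightarrow> ('x \<Rightarrow> 'b)
    \<Rightarrow> ('e \<Rightarrow> 'x) \<Rightarrow> enat" where
  "secat_B E pE X pX f = (INF k \<in> {k::nat. \<exists>U :: nat \<Rightarrow> 'x set.
       (\<forall>i\<le>k. openin X (U i)) \<and> (\<Union>i\<le>k. U i) = topspace X \<and>
       (\<forall>i\<le>k. \<exists>\<sigma>. fib_map (subtopology X (U i)) pX E pE \<sigma> \<and>
            fib_homotopic (subtopology X (U i)) pX X pX (f \<circ> \<sigma>) id)}. enat k)"

definition secatp_B :: "'b topology \<Rightarrow> 'e topology \<Rightarrow> ('e \<Rightarrow> 'b) \<Rightarrow> ('b \<Rightarrow> 'e)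
    \<Rightarrow> 'x topology \<Rightarrow> ('x \<Rightarrow> 'b) \<Rightarrow> ('b \<Rightarrow> 'x) \<Rightarrow> ('e \<Rightarrow> 'x) \<Rightarrow> enat" where
  "secatp_B B E pE sE X pX sX f = (INF k \<in> {k::nat. \<exists>U :: nat \<Rightarrow> 'x set.
       (\<forall>i\<le>k. openin X (U i) \<and> sX ` topspace B \<subseteq> U i) \<and> (\<Union>i\<le>k. U i) = topspace X \<and>
       (\<forall>i\<le>k. \<exists>\<sigma>. fib_map (subtopology X (U i)) pX E pE \<sigma> \<and>
            (\<forall>b\<in>topspace B. \<sigma> (sX b) = sE b) \<and>
            fibp_homotopic B (subtopology X (U i)) pX sX X pX sX (f \<circ> \<sigma>) id)}. enat k)"

definition TC_B :: "'b topology \<Rightarrow> 'x topology \<Rightarrow> ('x \<Rightarrow> 'b) \<Rightarrow> enat" where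
  "TC_B B X p = secat_B (fib_paths B X p) fib_paths_proj (fib_prod X p) (fib_prod_proj p) Pi_map"

definition TCp_B :: "'b topology \<Rightarrow> 'x topology \<Rightarrow> ('x \<Rightarrow> 'b) \<Rightarrow> ('b \<Rightarrow> 'x) \<Rightarrow> enat" where
  "TCp_B B X p s = secatp_B B (fib_paths B X p) fib_paths_proj (fib_paths_sec s)
      (fib_prod X p) (fib_prod_proj p) (fib_prod_sec s) Pi_map"

end

(*
  TC_B X <= TC^B_B X because a pointed local homotopy section is in particular a local homotopy
  section.  Conversely, applying the fibrewise homotopy extension property of the diagonal to the
  fibrewise mapping cylinder of the diagonal yields a fibrewise deformation of X \<times>_B X, fixing the
  diagonal, that pushes an open neighbourhood N of the diagonal into it.  Following this
  deformation out of (x, y) in the first coordinate and back in the second gives a path from x to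
  y, hence a strict section of Pi over N which is constant on the diagonal, in particular pointed.
  By normality choose an open N1 around the diagonal and an open V containing the complement of
  N with N1 and V disjoint; then N together with the sets N1 \<union> (U_i \<inter> V) turns an open cover
  U_0, ..., U_k by local homotopy sections into a cover by k + 2 pointed ones.
*)
theory Submission
  imports Defs
begin

lemma continuous_map_into_topology_generated_by:
  assumes "f \<in> topspace W \<rightarrow> \<Union>S"
    and "\<And>U. U \<in> S \<Longrightarrow> openin W {x \<in> topspace W. f x \<in> U}"
  shows "continuous_map W (topology_generated_by S) f"
proof -
  have "openin W {x \<in> topspace W. f x \<in> U}" if "generate_topology_on S U" for U
    using that
  proof (induction rule: generate_topology_on.induct)
    case (Int a b)
    have "{x \<in> topspace W. f x \<in> a \<inter> b} = {x \<in> topspace W. f x \<in> a} \<inter> {x \<in> topspace W. f x \<in> b}"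
      by auto
    with Int show ?case by auto
  next
    case (UN K)
    have "{x \<in> topspace W. f x \<in> \<Union>K} = (\<Union>k\<in>K. {x \<in> topspace W. f x \<in> k})"
      by auto
    with UN show ?case by auto
  qed (use assms(2) in auto)
  with assms(1) show ?thesis
    unfolding continuous_map_def by (auto simp: openin_topology_generated_by_iff)
qed

lemma topspace_compact_open [simp]: "topspace (compact_open X) = paths X"
  unfolding compact_open_def topology_generated_by_topspace by blast

lemma continuous_map_compact_open_curry:
  assumes F: "continuous_map (prod_topology W unit_interval) X F"
  shows "continuous_map W (compact_open X) (\<lambda>w. restrict (\<lambda>t. F (w, t)) {0..1})"
  unfolding compact_open_def
proof (rule continuous_map_into_topology_generated_by)
  have path: "restrict (\<lambda>t. F (w, t)) {0..1} \<in> paths X" if w: "w \<in> topspace W" for w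
  proof -
    have "continuous_map unit_interval X (F \<circ> Pair w)"
      by (rule continuous_map_compose[OF _ F]) (auto simp: w intro!: continuous_intros)
    then have "continuous_map unit_interval X (restrict (\<lambda>t. F (w, t)) {0..1})"
      by (rule continuous_map_eq) auto
    then show ?thesis unfolding paths_def by auto
  qed
  then show "(\<lambda>w. restrict (\<lambda>t. F (w, t)) {0..1}) \<in> topspace W \<rightarrow>
      \<Union> (insert (paths X) {{\<alpha> \<in> paths X. \<alpha> ` K \<subseteq> V} |K V. compactin unit_interval K \<and> openin X V})"
    by blast
  fix U
  assume "U \<in> insert (paths X) {{\<alpha> \<in> paths X. \<alpha> ` K \<subseteq> V} |K V. compactin unit_interval K \<and> openin X V}"
  then consider "U = paths X"
    | K V where "U = {\<alpha> \<in> paths X. \<alpha> ` K \<subseteq> V}" "compactin unit_interval K" "openin X V"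
    by blast
  then show "openin W {w \<in> topspace W. restrict (\<lambda>t. F (w, t)) {0..1} \<in> U}"
  proof cases
    case 1
    with path have "{w \<in> topspace W. restrict (\<lambda>t. F (w, t)) {0..1} \<in> U} = topspace W"
      by auto
    then show ?thesis by simp
  next
    case 2
    have K: "K \<subseteq> {0..1}" using compactin_subset_topspace[OF 2(2)] by simp
    have eq: "{w \<in> topspace W. restrict (\<lambda>t. F (w, t)) {0..1} \<in> U} = {w \<in> topspace W. \<forall>t\<in>K. F (w, t) \<in> V}"
      using path K 2(1) by (auto simp: image_subset_iff)
    define FV where "FV = {z \<in> topspace (prod_topology W unit_interval). F z \<in> V}"
    have "openin (prod_topology W unit_interval) FV"
      unfolding FV_def using F 2(3) by (simp add: continuous_map_def)
    show ?thesis unfolding eq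
    proof (subst openin_subopen, clarify)
      fix w assume w: "w \<in> topspace W" "\<forall>t\<in>K. F (w, t) \<in> V"
      then have "{w} \<times> K \<subseteq> FV" using K by (auto simp: FV_def)
      from tube_lemma_right[OF \<open>openin _ FV\<close> 2(2) w(1) this]
      obtain T T' where T: "openin W T" "w \<in> T" "K \<subseteq> T'" "T \<times> T' \<subseteq> FV"
        by blast
      then have "T \<subseteq> {w \<in> topspace W. \<forall>t\<in>K. F (w, t) \<in> V}"
        using openin_subset[OF T(1)] by (auto simp: FV_def)
      with T show "\<exists>T. openin W T \<and> w \<in> T \<and> T \<subseteq> {w \<in> topspace W. \<forall>t\<in>K. F (w, t) \<in> V}"
        by blast
    qed
  qed
qed

lemma continuous_map_if_open_cover:
  assumes "openin X S" "openin X T" "S \<inter> T = {}" "topspace X \<subseteq> S \<union> T"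
    and "continuous_map (subtopology X S) Y f" "continuous_map (subtopology X T) Y g"
  shows "continuous_map X Y (\<lambda>x. if x \<in> S then f x else g x)"
  by (rule pasting_lemma[where I = "UNIV :: bool set" and T = "\<lambda>b. if b then S else T"
        and f = "\<lambda>b. if b then f else g"])
    (use assms in \<open>auto split: if_splits\<close>)

lemma continuous_map_prod_subtopology_inclusion:
  assumes "S \<subseteq> T"
  shows "continuous_map (prod_topology (subtopology X S) Y) (prod_topology (subtopology X T) Y) id"
proof -
  have "subtopology X S = subtopology (subtopology X T) S"
    using assms by (simp add: subtopology_subtopology Int_absorb1)
  then have "continuous_map (subtopology X S) (subtopology X T) id"
    by simp
  then show ?thesis
    using continuous_map_prod_top[of "subtopology X S" Y _ _ id id] by simp
qed

definition fib_homotopy_section :: "'e topology \<Rightarrow> ('e \<Rightarrow> 'b) \<Rightarrow> 'x topology \<Rightarrow> ('x \<Rightarrow> 'b)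
    \<Rightarrow> ('e \<Rightarrow> 'x) \<Rightarrow> 'x set \<Rightarrow> bool" where
  "fib_homotopy_section E pE X pX f U \<longleftrightarrow> (\<exists>\<sigma>. fib_map (subtopology X U) pX E pE \<sigma> \<and>
     fib_homotopic (subtopology X U) pX X pX (f \<circ> \<sigma>) id)"

definition fibp_homotopy_section :: "'b topology \<Rightarrow> 'e topology \<Rightarrow> ('e \<Rightarrow> 'b) \<Rightarrow> ('b \<Rightarrow> 'e)
    \<Rightarrow> 'x topology \<Rightarrow> ('x \<Rightarrow> 'b) \<Rightarrow> ('b \<Rightarrow> 'x) \<Rightarrow> ('e \<Rightarrow> 'x) \<Rightarrow> 'x set \<Rightarrow> bool" where
  "fibp_homotopy_section B E pE sE X pX sX f U \<longleftrightarrow> (\<exists>\<sigma>. fib_map (subtopology X U) pX E pE \<sigma> \<and>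
     (\<forall>b\<in>topspace B. \<sigma> (sX b) = sE b) \<and>
     fibp_homotopic B (subtopology X U) pX sX X pX sX (f \<circ> \<sigma>) id)"

definition fib_secat_cover :: "'e topology \<Rightarrow> ('e \<Rightarrow> 'b) \<Rightarrow> 'x topology \<Rightarrow> ('x \<Rightarrow> 'b)
    \<Rightarrow> ('e \<Rightarrow> 'x) \<Rightarrow> nat \<Rightarrow> bool" where
  "fib_secat_cover E pE X pX f k \<longleftrightarrow> (\<exists>U. (\<forall>i\<le>k. openin X (U i)) \<and> (\<Union>i\<le>k. U i) = topspace X \<and>
     (\<forall>i\<le>k. fib_homotopy_section E pE X pX f (U i)))"

definition fibp_secat_cover :: "'b topology \<Rightarrow> 'e topology \<Rightarrow> ('e \<Rightarrow> 'b) \<Rightarrow> ('b \<Rightarrow> 'e)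
    \<Rightarrow> 'x topology \<Rightarrow> ('x \<Rightarrow> 'b) \<Rightarrow> ('b \<Rightarrow> 'x) \<Rightarrow> ('e \<Rightarrow> 'x) \<Rightarrow> nat \<Rightarrow> bool" where
  "fibp_secat_cover B E pE sE X pX sX f k \<longleftrightarrow>
     (\<exists>U. (\<forall>i\<le>k. openin X (U i) \<and> sX ` topspace B \<subseteq> U i) \<and> (\<Union>i\<le>k. U i) = topspace X \<and>
       (\<forall>i\<le>k. fibp_homotopy_section B E pE sE X pX sX f (U i)))"

lemma secat_B_eq_INF:
  "secat_B E pE X pX f = (INF k \<in> {k. fib_secat_cover E pE X pX f k}. enat k)"
  unfolding secat_B_def fib_secat_cover_def fib_homotopy_section_def ..

lemma secatp_B_eq_INF:
  "secatp_B B E pE sE X pX sX f = (INF k \<in> {k. fibp_secat_cover B E pE sE X pX sX f k}. enat k)"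
  unfolding secatp_B_def fibp_secat_cover_def fibp_homotopy_section_def ..

lemma fibp_homotopy_section_imp_fib_homotopy_section:
  "fibp_homotopy_section B E pE sE X pX sX f U \<Longrightarrow> fib_homotopy_section E pE X pX f U"
  unfolding fibp_homotopy_section_def fib_homotopy_section_def fibp_homotopic_def fib_homotopic_def
  by blast

lemma fibp_secat_cover_imp_fib_secat_cover:
  assumes "fibp_secat_cover B E pE sE X pX sX f k"
  shows "fib_secat_cover E pE X pX f k"
proof -
  from assms obtain U where "\<forall>i\<le>k. openin X (U i)" "(\<Union>i\<le>k. U i) = topspace X"
    and "\<forall>i\<le>k. fibp_homotopy_section B E pE sE X pX sX f (U i)"
    unfolding fibp_secat_cover_def by auto
  then show ?thesis
    unfolding fib_secat_cover_def
    by (metis fibp_homotopy_section_imp_fib_homotopy_section)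
qed

lemma secat_B_le_secatp_B: "secat_B E pE X pX f \<le> secatp_B B E pE sE X pX sX f"
  unfolding secat_B_eq_INF secatp_B_eq_INF
  by (rule INF_superset_mono) (auto intro: fibp_secat_cover_imp_fib_secat_cover)

lemma fib_map_subtopology_mono:
  "fib_map (subtopology X U) pX Y pY f \<Longrightarrow> V \<subseteq> U \<Longrightarrow> fib_map (subtopology X V) pX Y pY f"
  unfolding fib_map_def by (auto intro: continuous_map_from_subtopology_mono)

lemma fib_homotopy_subtopology_mono:
  assumes H: "fib_homotopy (subtopology X U) pX Y pY H" and "V \<subseteq> U"
  shows "fib_homotopy (subtopology X V) pX Y pY H"
proof -
  have "continuous_map (prod_topology (subtopology X V) unit_interval) Y (H \<circ> id)"
    using H continuous_map_prod_subtopology_inclusion[OF \<open>V \<subseteq> U\<close>]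
    unfolding fib_homotopy_def by (blast intro: continuous_map_compose)
  with H \<open>V \<subseteq> U\<close> show ?thesis
    by (auto simp: fib_homotopy_def)
qed

lemma fib_homotopic_subtopology_mono:
  assumes "fib_homotopic (subtopology X U) pX Y pY f g" "V \<subseteq> U"
  shows "fib_homotopic (subtopology X V) pX Y pY f g"
proof -
  obtain H where H: "fib_homotopy (subtopology X U) pX Y pY H"
    and "\<forall>x\<in>topspace (subtopology X U). H (x, 0) = f x \<and> H (x, 1) = g x"
    using assms(1) unfolding fib_homotopic_def by blast
  with assms(2) fib_homotopy_subtopology_mono[OF H assms(2)] show ?thesis
    unfolding fib_homotopic_def by (intro exI[of _ H]) auto
qed

lemma fibp_homotopic_subtopology_mono:
  assumes "fibp_homotopic B (subtopology X U) pX sX Y pY sY f g" "V \<subseteq> U"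
  shows "fibp_homotopic B (subtopology X V) pX sX Y pY sY f g"
proof -
  obtain H where H: "fib_homotopy (subtopology X U) pX Y pY H"
    and "\<forall>x\<in>topspace (subtopology X U). H (x, 0) = f x \<and> H (x, 1) = g x"
    and "\<forall>b\<in>topspace B. \<forall>t\<in>{0..1}. H (sX b, t) = sY b"
    using assms(1) unfolding fibp_homotopic_def by blast
  with assms(2) fib_homotopy_subtopology_mono[OF H assms(2)] show ?thesis
    unfolding fibp_homotopic_def by (intro exI[of _ H]) auto
qed

lemma fib_homotopy_section_subset:
  "fib_homotopy_section E pE X pX f U \<Longrightarrow> V \<subseteq> U \<Longrightarrow> fib_homotopy_section E pE X pX f V"
  unfolding fib_homotopy_section_def
  by (meson fib_map_subtopology_mono fib_homotopic_subtopology_mono)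

lemma fibp_homotopy_section_subset:
  "fibp_homotopy_section B E pE sE X pX sX f U \<Longrightarrow> V \<subseteq> U \<Longrightarrow>
    fibp_homotopy_section B E pE sE X pX sX f V"
  unfolding fibp_homotopy_section_def
  by (meson fib_map_subtopology_mono fibp_homotopic_subtopology_mono)

lemma fibp_homotopy_section_of_section:
  assumes "fib_map (subtopology X U) pX E pE \<sigma>" "\<forall>z\<in>U. f (\<sigma> z) = z"
    and "\<forall>b\<in>topspace B. \<sigma> (sX b) = sE b"
  shows "fibp_homotopy_section B E pE sE X pX sX f U"
proof -
  have "continuous_map (prod_topology (subtopology X U) unit_interval) X fst"
    by (rule continuous_map_into_fulltopology[OF continuous_map_fst])
  with assms show ?thesis
    unfolding fibp_homotopy_section_def fibp_homotopic_def fib_homotopy_def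
    by (intro exI[of _ \<sigma>] conjI exI[of _ fst]) auto
qed

lemma fibp_homotopy_section_Un:
  assumes N: "openin X N" and U: "openin X U" and "N \<inter> U = {}"
    and sN: "sX ` topspace B \<subseteq> N"
    and "fibp_homotopy_section B E pE sE X pX sX f N"
    and "fib_homotopy_section E pE X pX f U"
  shows "fibp_homotopy_section B E pE sE X pX sX f (N \<union> U)"
proof -
  obtain \<sigma>N HN where \<sigma>N: "fib_map (subtopology X N) pX E pE \<sigma>N" "\<forall>b\<in>topspace B. \<sigma>N (sX b) = sE b"
    and HN: "fib_homotopy (subtopology X N) pX X pX HN"
      "\<forall>z\<in>topspace (subtopology X N). HN (z, 0) = f (\<sigma>N z) \<and> HN (z, 1) = z"
      "\<forall>b\<in>topspace B. \<forall>t\<in>{0..1}. HN (sX b, t) = sX b"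
    using assms(5) unfolding fibp_homotopy_section_def fibp_homotopic_def by auto
  obtain \<sigma>U HU where \<sigma>U: "fib_map (subtopology X U) pX E pE \<sigma>U"
    and HU: "fib_homotopy (subtopology X U) pX X pX HU"
      "\<forall>z\<in>topspace (subtopology X U). HU (z, 0) = f (\<sigma>U z) \<and> HU (z, 1) = z"
    using assms(6) unfolding fib_homotopy_section_def fib_homotopic_def by auto
  let ?W = "subtopology X (N \<union> U)"
  let ?P = "prod_topology ?W unit_interval"
  define \<sigma> where "\<sigma> z = (if z \<in> N then \<sigma>N z else \<sigma>U z)" for z
  define H where "H y = (if y \<in> N \<times> {0..1} then HN y else HU y)" for y
  have W: "openin X (N \<union> U)"
    using N U by blast
  have opens: "openin ?W N" "openin ?W U"
    using N U by (auto simp: openin_open_subtopology[OF W])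
  have subW: "subtopology ?W N = subtopology X N" "subtopology ?W U = subtopology X U"
    by (simp_all add: subtopology_subtopology Int_absorb1)
  have subP: "subtopology ?P (N \<times> {0..1}) = prod_topology (subtopology X N) unit_interval"
    "subtopology ?P (U \<times> {0..1}) = prod_topology (subtopology X U) unit_interval"
    by (simp_all add: subtopology_Times subW subtopology_subtopology)
  have "continuous_map ?W E \<sigma>"
    unfolding \<sigma>_def
    by (rule continuous_map_if_open_cover[OF opens \<open>N \<inter> U = {}\<close>])
      (use \<sigma>N \<sigma>U in \<open>auto simp: subW fib_map_def\<close>)
  moreover have "continuous_map ?P X H"
    unfolding H_def
    by (rule continuous_map_if_open_cover[where T = "U \<times> {0..1}"])
      (use opens \<open>N \<inter> U = {}\<close> HN HU in \<open>auto simp: openin_prod_Times_iff subP fib_homotopy_def\<close>)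
  ultimately show ?thesis
    using \<sigma>N \<sigma>U HN HU sN
    unfolding fibp_homotopy_section_def fibp_homotopic_def fib_homotopy_def fib_map_def
    by (intro exI[of _ \<sigma>] exI[of _ H] conjI ballI) (auto simp: \<sigma>_def H_def)
qed

lemma INF_enat_le_Suc:
  assumes "\<And>k. P k \<Longrightarrow> Q (Suc k)"
  shows "(INF k\<in>{k. Q k}. enat k) \<le> (INF k\<in>{k. P k}. enat k) + 1"
proof (cases "\<exists>k. P k")
  case False
  then show ?thesis by (simp add: top_enat_def)
next
  case True
  define k0 where "k0 = (LEAST k. P k)"
  have "P k0"
    using True LeastI_ex unfolding k0_def by metis
  have "(INF k\<in>{k. P k}. enat k) = enat k0"
  proof (rule antisym)
    show "(INF k\<in>{k. P k}. enat k) \<le> enat k0"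
      using \<open>P k0\<close> by (auto intro: INF_lower)
    show "enat k0 \<le> (INF k\<in>{k. P k}. enat k)"
      by (rule INF_greatest) (auto simp: k0_def intro: Least_le)
  qed
  moreover have "(INF k\<in>{k. Q k}. enat k) \<le> enat (Suc k0)"
    using assms[OF \<open>P k0\<close>] by (auto intro: INF_lower)
  ultimately show ?thesis
    by (simp add: eSuc_enat[symmetric] eSuc_plus_1)
qed

lemma fibp_secat_cover_Suc:
  assumes N: "openin X N" "sX ` topspace B \<subseteq> N1"
    and N1: "openin X N1" and V: "openin X V" "topspace X - N \<subseteq> V" and "N1 \<inter> V = {}"
    and secN: "fibp_homotopy_section B E pE sE X pX sX f N"
    and cover: "fib_secat_cover E pE X pX f k"
  shows "fibp_secat_cover B E pE sE X pX sX f (Suc k)"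
proof -
  obtain U where U: "\<forall>i\<le>k. openin X (U i)" "(\<Union>i\<le>k. U i) = topspace X"
    and secU: "\<forall>i\<le>k. fib_homotopy_section E pE X pX f (U i)"
    using cover unfolding fib_secat_cover_def by auto
  have "N1 \<subseteq> N"
    using openin_subset[OF N1] V(2) \<open>N1 \<inter> V = {}\<close> by blast
  then have secN1: "fibp_homotopy_section B E pE sE X pX sX f N1"
    by (rule fibp_homotopy_section_subset[OF secN])
  define U' where "U' i = (if i = Suc k then N else N1 \<union> (U i \<inter> V))" for i
  have "fibp_homotopy_section B E pE sE X pX sX f (U' i)" if "i \<le> Suc k" for i
  proof (cases "i = Suc k")
    case False
    with that have "i \<le> k" by simp
    then have "fib_homotopy_section E pE X pX f (U i \<inter> V)" "openin X (U i \<inter> V)"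
      using secU U(1) V(1) by (blast intro: fib_homotopy_section_subset)+
    with fibp_homotopy_section_Un[OF N1 _ _ N(2) secN1] \<open>N1 \<inter> V = {}\<close> False show ?thesis
      by (auto simp: U'_def)
  qed (simp add: U'_def secN)
  moreover have "topspace X \<subseteq> (\<Union>i\<le>Suc k. U' i)"
  proof
    fix z assume "z \<in> topspace X"
    show "z \<in> (\<Union>i\<le>Suc k. U' i)"
    proof (cases "z \<in> N")
      case False
      with \<open>z \<in> topspace X\<close> U(2) V(2) obtain i where "i \<le> k" "z \<in> U i \<inter> V"
        by blast
      then show ?thesis by (auto simp: U'_def)
    qed (auto simp: U'_def)
  qed
  moreover have "openin X (U' i) \<and> sX ` topspace B \<subseteq> U' i" if "i \<le> Suc k" for i
    using that N N1 V U(1) \<open>N1 \<subseteq> N\<close> by (auto simp: U'_def le_Suc_eq intro!: openin_Un openin_Int)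
  ultimately show ?thesis
    unfolding fibp_secat_cover_def
    by (intro exI[of _ U'] conjI subset_antisym) (auto dest!: openin_subset)
qed

lemma secatp_B_le_secat_B_plus_1:
  assumes normal: "normal_space X" and D: "closedin X D" "sX ` topspace B \<subseteq> D"
    and N: "openin X N" "D \<subseteq> N"
    and secN: "fibp_homotopy_section B E pE sE X pX sX f N"
  shows "secatp_B B E pE sE X pX sX f \<le> secat_B E pE X pX f + 1"
proof -
  have "closedin X (topspace X - N)" "disjnt D (topspace X - N)"
    using N by (auto simp: disjnt_def)
  then obtain N1 V where N1: "openin X N1" "D \<subseteq> N1" and V: "openin X V" "topspace X - N \<subseteq> V"
    and "disjnt N1 V"
    using normal D(1) unfolding normal_space_def by meson
  then have "fib_secat_cover E pE X pX f k \<Longrightarrow> fibp_secat_cover B E pE sE X pX sX f (Suc k)" for k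
    using D(2) by (intro fibp_secat_cover_Suc[OF N(1) _ N1(1) V _ secN]) (auto simp: disjnt_def)
  then show ?thesis
    unfolding secatp_B_eq_INF secat_B_eq_INF by (rule INF_enat_le_Suc)
qed

lemma fib_cofibration_cylinder_retraction:
  fixes A :: "'a topology" and X :: "'x topology" and j :: "'a \<Rightarrow> 'x"
  assumes pX: "continuous_map X B pX" and cof: "fib_cofibration B A pA X pX j"
  obtains R where "continuous_map (prod_topology X unit_interval) (prod_topology X euclideanreal) R"
    "\<And>y. y \<in> topspace X \<times> {0..1} \<Longrightarrow> R y \<in> topspace X \<times> {0} \<union> j ` topspace A \<times> {0..1}"
    "\<And>x. x \<in> topspace X \<Longrightarrow> R (x, 0) = (x, 0)"
    "\<And>a t. a \<in> topspace A \<Longrightarrow> t \<in> {0..1} \<Longrightarrow> R (j a, t) = (j a, t)"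
    "\<And>x t. x \<in> topspace X \<Longrightarrow> t \<in> {0..1} \<Longrightarrow> pX (fst (R (x, t))) = pX x"
proof -
  have j: "fib_map A pA X pX j"
    using cof unfolding fib_cofibration_def by blast
  have jA: "j a \<in> topspace X" if "a \<in> topspace A" for a
    using j that unfolding fib_map_def by (meson continuous_map_image_subset_topspace image_subset_iff)
  \<comment> \<open>the mapping cylinder \<open>X \<times> {0} \<union> j(A) \<times> [0,1]\<close>, embedded via \<open>Inr\<close> into the test type of
    \<open>fib_cofibration\<close> and topologised as a subspace of \<open>X \<times> \<real>\<close> through \<open>q\<close>\<close>
  define q :: "('a + 'x) \<times> real \<Rightarrow> 'x \<times> real" where "q y = (projr (fst y), snd y)" for y
  define C :: "(('a + 'x) \<times> real) set" where
    "C = {(Inr x, t) | x t. x \<in> topspace X \<and> (t = 0 \<or> x \<in> j ` topspace A \<and> t \<in> {0..1})}"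
  define Y where "Y = pullback_topology C q (prod_topology X euclideanreal)"
  define pY where "pY = (pX \<circ> fst) \<circ> q"
  define f0 where "f0 x = (Inr x :: 'a + 'x, 0 :: real)" for x
  define H0 where "H0 y = (Inr (j (fst y)) :: 'a + 'x, snd y)" for y :: "'a \<times> real"
  have tY: "topspace Y = C"
    by (auto simp: Y_def topspace_pullback_topology C_def q_def)
  have "fib_space B Y pY"
    unfolding fib_space_def Y_def pY_def
    by (intro continuous_map_pullback continuous_map_compose[OF continuous_map_fst pX])
  moreover have "fib_map X pX Y pY f0"
  proof -
    have "continuous_map X (prod_topology X euclideanreal) (q \<circ> f0)"
      by (simp add: q_def f0_def o_def continuous_map_pairedI)
    then show ?thesis
      by (auto simp: fib_map_def Y_def C_def f0_def pY_def q_def)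
  qed
  moreover have "fib_homotopy A pA Y pY H0"
  proof -
    have "continuous_map (prod_topology A unit_interval) (prod_topology X euclideanreal) (q \<circ> H0)"
      using j unfolding fib_map_def q_def H0_def o_def
      by (auto intro!: continuous_map_pairedI continuous_map_compose[OF continuous_map_fst, unfolded o_def]
          continuous_map_into_fulltopology[OF continuous_map_snd])
    then show ?thesis
      using j jA by (auto simp: fib_homotopy_def fib_map_def Y_def C_def H0_def pY_def q_def)
  qed
  moreover have "\<forall>a\<in>topspace A. H0 (a, 0) = f0 (j a)"
    by (simp add: H0_def f0_def)
  ultimately obtain H where H: "fib_homotopy X pX Y pY H"
    and H0: "\<forall>x\<in>topspace X. H (x, 0) = f0 x"
    and Hj: "\<forall>a\<in>topspace A. \<forall>t\<in>{0..1}. H (j a, t) = H0 (a, t)"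
    using cof unfolding fib_cofibration_def by blast
  show ?thesis
  proof
    show "continuous_map (prod_topology X unit_interval) (prod_topology X euclideanreal) (q \<circ> H)"
      using H continuous_map_pullback[OF continuous_map_id]
      unfolding fib_homotopy_def Y_def by (metis continuous_map_compose id_comp)
    show "(q \<circ> H) y \<in> topspace X \<times> {0} \<union> j ` topspace A \<times> {0..1}" if "y \<in> topspace X \<times> {0..1}" for y
    proof -
      have "H y \<in> C"
        using H that tY unfolding fib_homotopy_def
        by (metis continuous_map_image_subset_topspace image_subset_iff topspace_prod_topology
            topspace_euclidean_subtopology)
      then show ?thesis
        by (auto simp: C_def q_def)
    qed
    show "(q \<circ> H) (x, 0) = (x, 0)" if "x \<in> topspace X" for x
      using H0 that by (simp add: q_def f0_def)
    show "(q \<circ> H) (j a, t) = (j a, t)" if "a \<in> topspace A" "t \<in> {0..1}" for a t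
      using Hj that by (simp add: q_def H0_def)
    show "pX (fst ((q \<circ> H) (x, t))) = pX x" if "x \<in> topspace X" "t \<in> {0..1}" for x t
      using H that unfolding fib_homotopy_def by (simp add: pY_def)
  qed
qed

lemma fib_cofibration_deformation:
  fixes A :: "'a topology" and X :: "'x topology" and j :: "'a \<Rightarrow> 'x"
  assumes pX: "continuous_map X B pX" and cof: "fib_cofibration B A pA X pX j"
  obtains N \<rho> where "openin X N" "j ` topspace A \<subseteq> N"
    "continuous_map (prod_topology X unit_interval) X \<rho>"
    "\<And>x. x \<in> topspace X \<Longrightarrow> \<rho> (x, 0) = x"
    "\<And>a t. a \<in> topspace A \<Longrightarrow> t \<in> {0..1} \<Longrightarrow> \<rho> (j a, t) = j a"
    "\<And>x t. x \<in> topspace X \<Longrightarrow> t \<in> {0..1} \<Longrightarrow> pX (\<rho> (x, t)) = pX x"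
    "\<And>x. x \<in> N \<Longrightarrow> \<rho> (x, 1) \<in> j ` topspace A"
proof -
  obtain R where R: "continuous_map (prod_topology X unit_interval) (prod_topology X euclideanreal) R"
    and R_cyl: "\<And>y. y \<in> topspace X \<times> {0..1} \<Longrightarrow> R y \<in> topspace X \<times> {0} \<union> j ` topspace A \<times> {0..1}"
    and R0: "\<And>x. x \<in> topspace X \<Longrightarrow> R (x, 0) = (x, 0)"
    and Rj: "\<And>a t. a \<in> topspace A \<Longrightarrow> t \<in> {0..1} \<Longrightarrow> R (j a, t) = (j a, t)"
    and Rproj: "\<And>x t. x \<in> topspace X \<Longrightarrow> t \<in> {0..1} \<Longrightarrow> pX (fst (R (x, t))) = pX x"
    by (rule fib_cofibration_cylinder_retraction[OF pX cof]) blast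
  have jA: "j a \<in> topspace X" if "a \<in> topspace A" for a
    using cof that unfolding fib_cofibration_def fib_map_def
    by (meson continuous_map_image_subset_topspace image_subset_iff)
  \<comment> \<open>points whose retracted track ends at positive height have been pushed into \<open>j(A)\<close>\<close>
  define N where "N = {x \<in> topspace X. snd (R (x, 1)) \<in> {0<..}}"
  show ?thesis
  proof
    have "continuous_map X euclideanreal (\<lambda>x. snd (R (x, 1)))"
      using continuous_map_compose[OF continuous_map_compose[OF _ R] continuous_map_snd, of X "\<lambda>x. (x, 1)"]
      by (simp add: o_def continuous_map_pairedI)
    then show "openin X N"
      unfolding N_def by (simp add: continuous_map_upper_lower_semicontinuous_lt)
    show "j ` topspace A \<subseteq> N"
      using Rj jA by (auto simp: N_def)
    show "continuous_map (prod_topology X unit_interval) X (fst \<circ> R)"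
      by (rule continuous_map_compose[OF R continuous_map_fst])
    show "(fst \<circ> R) (x, 0) = x" if "x \<in> topspace X" for x
      using R0 that by simp
    show "(fst \<circ> R) (j a, t) = j a" if "a \<in> topspace A" "t \<in> {0..1}" for a t
      using Rj that by simp
    show "pX ((fst \<circ> R) (x, t)) = pX x" if "x \<in> topspace X" "t \<in> {0..1}" for x t
      using Rproj that by simp
    show "(fst \<circ> R) (x, 1) \<in> j ` topspace A" if "x \<in> N" for x
      using R_cyl[of "(x, 1)"] that by (force simp: N_def)
  qed
qed

lemma topspace_fib_prod:
  "topspace (fib_prod X p) = {(x, y). x \<in> topspace X \<and> y \<in> topspace X \<and> p x = p y}"
  unfolding fib_prod_def by auto

lemma continuous_map_fib_prod_fst: "continuous_map (fib_prod X p) X fst"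
  unfolding fib_prod_def by (rule continuous_map_subtopology_fst)

lemma continuous_map_fib_prod_proj:
  "continuous_map X B p \<Longrightarrow> continuous_map (fib_prod X p) B (fib_prod_proj p)"
  unfolding fib_prod_proj_def case_prod_unfold
  by (auto intro: continuous_map_compose[OF continuous_map_fib_prod_fst, unfolded o_def])

lemma continuous_map_join_components:
  fixes \<rho> :: "'w \<times> real \<Rightarrow> 'x \<times> 'x"
  assumes \<rho>: "continuous_map (prod_topology W unit_interval) (prod_topology X X) \<rho>"
    and meet: "\<And>w. w \<in> topspace W \<Longrightarrow> fst (\<rho> (w, 1)) = snd (\<rho> (w, 1))"
  shows "continuous_map (prod_topology W unit_interval) X
    (\<lambda>y. if snd y \<le> 1/2 then fst (\<rho> (fst y, 2 * snd y)) else snd (\<rho> (fst y, 2 - 2 * snd y)))"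
proof (rule continuous_map_cases_le)
  let ?P = "prod_topology W unit_interval"
  have along_\<rho>: "continuous_map (subtopology ?P S) (prod_topology X X) (\<lambda>y. \<rho> (fst y, g (snd y)))"
    if "continuous_map euclideanreal euclideanreal g" "\<forall>y\<in>topspace (subtopology ?P S). g (snd y) \<in> {0..1}"
    for S g
  proof -
    have "continuous_map (subtopology ?P S) W fst"
      by (rule continuous_map_subtopology_fst)
    moreover have "continuous_map (subtopology ?P S) unit_interval (g \<circ> snd)"
    proof -
      have "continuous_map (subtopology ?P S) euclideanreal snd"
        by (meson continuous_map_from_subtopology continuous_map_snd continuous_map_into_fulltopology)
      from continuous_map_compose[OF this that(1)] that(2) show ?thesis
        by (auto simp: continuous_map_in_subtopology)
    qed
    ultimately show ?thesis
      using continuous_map_compose[OF continuous_map_pairedI \<rho>] by (simp add: o_def)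
  qed
  have "continuous_map (subtopology ?P {y \<in> topspace ?P. snd y \<le> 1/2}) (prod_topology X X)
      (\<lambda>y. \<rho> (fst y, 2 * snd y))"
    by (rule along_\<rho>) (auto intro!: continuous_intros)
  from continuous_map_compose[OF this continuous_map_fst]
  show "continuous_map (subtopology ?P {y \<in> topspace ?P. snd y \<le> 1/2}) X (\<lambda>y. fst (\<rho> (fst y, 2 * snd y)))"
    by (simp add: o_def)
  have "continuous_map (subtopology ?P {y \<in> topspace ?P. 1/2 \<le> snd y}) (prod_topology X X)
      (\<lambda>y. \<rho> (fst y, 2 - 2 * snd y))"
    by (rule along_\<rho>) (auto intro!: continuous_intros)
  from continuous_map_compose[OF this continuous_map_snd]
  show "continuous_map (subtopology ?P {y \<in> topspace ?P. 1/2 \<le> snd y}) X (\<lambda>y. snd (\<rho> (fst y, 2 - 2 * snd y)))"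
    by (simp add: o_def)
  show "fst (\<rho> (fst y, 2 * snd y)) = snd (\<rho> (fst y, 2 - 2 * snd y))"
    if "y \<in> topspace ?P" "snd y = 1/2" for y
  proof -
    have "2 * snd y = 1" "2 - 2 * snd y = 1"
      using that(2) by simp_all
    with meet[of "fst y"] that(1) show ?thesis
      by auto
  qed
qed (rule continuous_map_into_fulltopology[OF continuous_map_snd], simp)

lemma continuous_map_into_fib_paths:
  assumes \<gamma>: "continuous_map (prod_topology W unit_interval) X \<gamma>" and b: "continuous_map W B b"
    and fibre: "\<And>w t. w \<in> topspace W \<Longrightarrow> t \<in> {0..1} \<Longrightarrow> p (\<gamma> (w, t)) = b w"
  shows "continuous_map W (fib_paths B X p) (\<lambda>w. (b w, restrict (\<lambda>t. \<gamma> (w, t)) {0..1}))"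
proof -
  have path: "continuous_map W (compact_open X) (\<lambda>w. restrict (\<lambda>t. \<gamma> (w, t)) {0..1})"
    by (rule continuous_map_compact_open_curry[OF \<gamma>])
  have "b w \<in> topspace B" "restrict (\<lambda>t. \<gamma> (w, t)) {0..1} \<in> paths X" if "w \<in> topspace W" for w
    using continuous_map_image_subset_topspace[OF b] continuous_map_image_subset_topspace[OF path] that
    by auto
  with fibre continuous_map_pairedI[OF b path] show ?thesis
    unfolding fib_paths_def continuous_map_in_subtopology by auto
qed

lemma fib_LEC_local_path_section:
  fixes X :: "'x topology" and p :: "'x \<Rightarrow> 'b"
  assumes p: "continuous_map X B p" and L: "fib_LEC B X p"
  obtains N \<sigma> where "openin (fib_prod X p) N" "diagonal ` topspace X \<subseteq> N"
    "fib_map (subtopology (fib_prod X p) N) (fib_prod_proj p) (fib_paths B X p) fib_paths_proj \<sigma>"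
    "\<And>z. z \<in> N \<Longrightarrow> Pi_map (\<sigma> z) = z"
    "\<And>x. x \<in> topspace X \<Longrightarrow> \<sigma> (x, x) = (p x, restrict (\<lambda>t. x) {0..1})"
proof -
  let ?Z = "fib_prod X p"
  have cof: "fib_cofibration B X p ?Z (fib_prod_proj p) diagonal"
    using L unfolding fib_LEC_def closed_fib_cofibration_def by blast
  obtain N \<rho> where N: "openin ?Z N" "diagonal ` topspace X \<subseteq> N"
    and \<rho>: "continuous_map (prod_topology ?Z unit_interval) ?Z \<rho>"
    and \<rho>0: "\<And>z. z \<in> topspace ?Z \<Longrightarrow> \<rho> (z, 0) = z"
    and \<rho>diag: "\<And>x t. x \<in> topspace X \<Longrightarrow> t \<in> {0..1} \<Longrightarrow> \<rho> (diagonal x, t) = diagonal x"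
    and \<rho>proj: "\<And>z t. z \<in> topspace ?Z \<Longrightarrow> t \<in> {0..1} \<Longrightarrow> fib_prod_proj p (\<rho> (z, t)) = fib_prod_proj p z"
    and \<rho>1: "\<And>z. z \<in> N \<Longrightarrow> \<rho> (z, 1) \<in> diagonal ` topspace X"
    by (rule fib_cofibration_deformation[OF continuous_map_fib_prod_proj[OF p] cof]) blast
  have NZ: "N \<subseteq> topspace ?Z"
    using openin_subset[OF N(1)] .
  let ?W = "subtopology ?Z N"
  \<comment> \<open>the path from \<open>x\<close> to \<open>y\<close> runs along \<open>\<rho>\<close> into the diagonal in the first component and back in the second\<close>
  define \<gamma> where "\<gamma> y = (if snd y \<le> 1/2 then fst (\<rho> (fst y, 2 * snd y)) else snd (\<rho> (fst y, 2 - 2 * snd y)))"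
    for y :: "('x \<times> 'x) \<times> real"
  have "continuous_map (prod_topology ?W unit_interval) ?Z (\<rho> \<circ> id)"
    using continuous_map_compose[OF continuous_map_prod_subtopology_inclusion[OF NZ, of ?Z unit_interval]] \<rho>
    by simp
  then have "continuous_map (prod_topology ?W unit_interval) (prod_topology X X) \<rho>"
    unfolding fib_prod_def by (simp add: continuous_map_into_fulltopology)
  then have \<gamma>: "continuous_map (prod_topology ?W unit_interval) X \<gamma>"
    unfolding \<gamma>_def
  proof (rule continuous_map_join_components)
    show "fst (\<rho> (z, 1)) = snd (\<rho> (z, 1))" if "z \<in> topspace ?W" for z
      using \<rho>1[of z] that by (auto simp: diagonal_def)
  qed
  have \<gamma>_proj: "p (\<gamma> (z, t)) = p (fst z)" if "z \<in> N" "t \<in> {0..1}" for z t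
  proof -
    have "\<rho> (z, s) \<in> topspace ?Z" "fib_prod_proj p (\<rho> (z, s)) = fib_prod_proj p z" if "s \<in> {0..1}" for s
    proof -
      have "(z, s) \<in> topspace (prod_topology ?Z unit_interval)"
        using \<open>z \<in> N\<close> NZ that by auto
      then show "\<rho> (z, s) \<in> topspace ?Z"
        using continuous_map_image_subset_topspace[OF \<rho>] by blast
      show "fib_prod_proj p (\<rho> (z, s)) = fib_prod_proj p z"
        using \<rho>proj \<open>z \<in> N\<close> NZ that by blast
    qed
    from this[of "2 * t"] this[of "2 - 2 * t"] show ?thesis
      using \<open>t \<in> {0..1}\<close> by (auto simp: \<gamma>_def fib_prod_proj_def topspace_fib_prod split: prod.splits)
  qed
  have base: "continuous_map ?W B (\<lambda>z. p (fst z))"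
    using continuous_map_compose[OF continuous_map_from_subtopology[OF continuous_map_fib_prod_fst] p]
    by (simp add: o_def)
  define \<sigma> where "\<sigma> z = (p (fst z), restrict (\<lambda>t. \<gamma> (z, t)) {0..1})" for z
  show ?thesis
  proof (rule that[OF N])
    have "continuous_map ?W (fib_paths B X p) \<sigma>"
      unfolding \<sigma>_def by (rule continuous_map_into_fib_paths[OF \<gamma> base]) (use \<gamma>_proj in auto)
    then show "fib_map ?W (fib_prod_proj p) (fib_paths B X p) fib_paths_proj \<sigma>"
      by (auto simp: fib_map_def \<sigma>_def fib_paths_proj_def fib_prod_proj_def)
    show "Pi_map (\<sigma> z) = z" if "z \<in> N" for z
      using \<rho>0[of z] NZ that by (auto simp: \<sigma>_def Pi_map_def \<gamma>_def)
    show "\<sigma> (x, x) = (p x, restrict (\<lambda>t. x) {0..1})" if "x \<in> topspace X" for x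
      using \<rho>diag[OF that] by (auto simp: \<sigma>_def \<gamma>_def diagonal_def)
  qed
qed

theorem corollary3p5:
  fixes B :: "'b topology" and X :: "'x topology" and p :: "'x \<Rightarrow> 'b" and s :: "'b \<Rightarrow> 'x"
  assumes "fibp_space B X p s"
    and "fib_LEC B X p"
    and "normal_space (fib_prod X p)"
  shows "TC_B B X p \<le> TCp_B B X p s \<and> TCp_B B X p s \<le> TC_B B X p + 1"
proof
  show "TC_B B X p \<le> TCp_B B X p s"
    unfolding TC_B_def TCp_B_def by (rule secat_B_le_secatp_B)
  have p: "continuous_map X B p" and s: "s ` topspace B \<subseteq> topspace X"
    and ps: "\<forall>b\<in>topspace B. p (s b) = b"
    using assms(1) by (auto simp: fibp_space_def continuous_map_image_subset_topspace)
  have diag_closed: "closedin (fib_prod X p) (diagonal ` topspace X)"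
    using assms(2) by (simp add: fib_LEC_def closed_fib_cofibration_def)
  have sec_diag: "fib_prod_sec s ` topspace B \<subseteq> diagonal ` topspace X"
    using s by (auto simp: fib_prod_sec_def diagonal_def)
  obtain N \<sigma> where N: "openin (fib_prod X p) N" "diagonal ` topspace X \<subseteq> N"
    and \<sigma>: "fib_map (subtopology (fib_prod X p) N) (fib_prod_proj p) (fib_paths B X p) fib_paths_proj \<sigma>"
      "\<And>z. z \<in> N \<Longrightarrow> Pi_map (\<sigma> z) = z"
      "\<And>x. x \<in> topspace X \<Longrightarrow> \<sigma> (x, x) = (p x, restrict (\<lambda>t. x) {0..1})"
    by (rule fib_LEC_local_path_section[OF p assms(2)]) blast
  have "fibp_homotopy_section B (fib_paths B X p) fib_paths_proj (fib_paths_sec s)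
      (fib_prod X p) (fib_prod_proj p) (fib_prod_sec s) Pi_map N"
    using \<sigma> s ps by (intro fibp_homotopy_section_of_section)
      (auto simp: fib_prod_sec_def fib_paths_sec_def)
  then show "TCp_B B X p s \<le> TC_B B X p + 1"
    unfolding TC_B_def TCp_B_def
    by (rule secatp_B_le_secat_B_plus_1[OF assms(3) diag_closed sec_diag N])
qed

end
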